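(* Let $\nabla$ be a finite undirected graph (loops allowed) and $X\in\mathbb{L}(\nabla)$. If $Y_0\subsetneq Y_1\subsetneq\cdots\subsetneq Y_n=X$ is a chain of elements of $\mathbb{L}(\nabla)$, then $n$ is at most the number of equilocality classes contained in $X$ that consist of essential vertices.
   Context: For a graph $\nabla$ with vertex set $V$: $\nabla(x)$ is the set of vertices adjacent to $x$, $\nabla(X)=\bigcap_{x\in X}\nabla(x)$ (with $\nabla(\emptyset)=V$), and $\mathbb{L}(\nabla)=\{X\subseteq V:\nabla(\nabla(X))=X\}$ ordered by inclusion. Two vertices $x,y$ are equilocal if $\nabla(x)=\nabla(y)$; equivalence classes are equilocality classes, and each element of $\mathbb{L}(\nabla)$ is a union of them. An element $a$ of a lattice is (completely) meet-irreducible if $a=\bigwedge A$ for a subset $A$ implies $a\in A$; a vertex $x$ is essential if $\nabla(x)$ is meet-irreducible in $\mathbb{L}(\nabla)$ (equilocal vertices are either all essential or all not). *)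

theory Defs
  imports Main
begin

text \<open>A graph is given by a vertex set V and a symmetric adjacency relation E
  (loops allowed). All notions are relativised to V.\<close>

definition nbhd :: "'a set \<Rightarrow> ('a \<Rightarrow> 'a \<Rightarrow> bool) \<Rightarrow> 'a \<Rightarrow> 'a set" where
  "nbhd V E x = {y \<in> V. E x y}"

definition nab :: "'a set \<Rightarrow> ('a \<Rightarrow> 'a \<Rightarrow> bool) \<Rightarrow> 'a set \<Rightarrow> 'a set" where
  "nab V E X = V \<inter> (\<Inter>x\<in>X. nbhd V E x)"

definition Lat :: "'a set \<Rightarrow> ('a \<Rightarrow> 'a \<Rightarrow> bool) \<Rightarrow> 'a set set" where
  "Lat V E = {X. X \<subseteq> V \<and> nab V E (nab V E X) = X}"

definition is_meet_in :: "'a set set \<Rightarrow> 'a set set \<Rightarrow> 'a set \<Rightarrow> bool" where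
  "is_meet_in L A a \<longleftrightarrow> a \<in> L \<and> (\<forall>b\<in>A. a \<subseteq> b) \<and>
     (\<forall>c\<in>L. (\<forall>b\<in>A. c \<subseteq> b) \<longrightarrow> c \<subseteq> a)"

definition meet_irreducible_in :: "'a set set \<Rightarrow> 'a set \<Rightarrow> bool" where
  "meet_irreducible_in L a \<longleftrightarrow> a \<in> L \<and>
     (\<forall>A. A \<subseteq> L \<longrightarrow> is_meet_in L A a \<longrightarrow> a \<in> A)"

definition essential :: "'a set \<Rightarrow> ('a \<Rightarrow> 'a \<Rightarrow> bool) \<Rightarrow> 'a \<Rightarrow> bool" where
  "essential V E x \<longleftrightarrow> x \<in> V \<and> meet_irreducible_in (Lat V E) (nbhd V E x)"

definition eqclass :: "'a set \<Rightarrow> ('a \<Rightarrow> 'a \<Rightarrow> bool) \<Rightarrow> 'a \<Rightarrow> 'a set" where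
  "eqclass V E x = {y \<in> V. nbhd V E y = nbhd V E x}"

end

theory Submission
  imports Defs
begin

text \<open>
  Every closed set is the intersection of the meet-irreducible closed sets above it, and a
  meet-irreducible closed set is the neighbourhood of an essential vertex. Hence the polar
  nab Z of a closed set Z is already the polar of the essential vertices in Z, so whenever
  Y \<subset> Y' are closed, some essential vertex lies in Y' - Y. Since closed sets are unions
  of equilocality classes, the essential vertices chosen for the successive steps of a chain
  ending in X lie in pairwise distinct classes contained in X.
\<close>

lemma mem_nab: "w \<in> nab V E X \<longleftrightarrow> w \<in> V \<and> (\<forall>x\<in>X. E x w)"
  by (auto simp: nab_def nbhd_def)

lemma nab_antimono: "X \<subseteq> Y \<Longrightarrow> nab V E Y \<subseteq> nab V E X"
  by (auto simp: nab_def)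

lemma nbhd_eq_nab_singleton: "nbhd V E y = nab V E {y}"
  by (auto simp: mem_nab nbhd_def)

lemma self_mem_eqclass: "x \<in> V \<Longrightarrow> x \<in> eqclass V E x"
  by (simp add: eqclass_def)

lemma Lat_subset: "Z \<in> Lat V E \<Longrightarrow> Z \<subseteq> V"
  by (simp add: Lat_def)

lemma Lat_subset_Pow: "Lat V E \<subseteq> Pow V"
  by (auto simp: Lat_def)

lemma Lat_nab_nab: "Z \<in> Lat V E \<Longrightarrow> nab V E (nab V E Z) = Z"
  by (simp add: Lat_def)

lemma mem_meet_irreducibles_imp_mem:
  assumes "finite V" and "L \<subseteq> Pow V" and Inter_closed: "\<And>A. A \<subseteq> L \<Longrightarrow> V \<inter> \<Inter>A \<in> L"
    and "Z \<in> L" and "x \<in> V"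
    and "\<And>M. meet_irreducible_in L M \<Longrightarrow> Z \<subseteq> M \<Longrightarrow> x \<in> M"
  shows "x \<in> Z"
  using assms(4-)
proof (induction "card (V - Z)" arbitrary: Z rule: less_induct)
  case less
  show ?case
  proof (cases "meet_irreducible_in L Z")
    case True
    then show ?thesis using less.prems by blast
  next
    case False
    then obtain A where A: "A \<subseteq> L" "is_meet_in L A Z" "Z \<notin> A"
      using less.prems(1) by (auto simp: meet_irreducible_in_def)
    have "x \<in> b" if "b \<in> A" for b
    proof -
      have "Z \<subset> b" using A that by (auto simp: is_meet_in_def)
      moreover have "b \<subseteq> V" "Z \<subseteq> V" using A that less.prems(1) \<open>L \<subseteq> Pow V\<close> by auto
      ultimately have "card (V - b) < card (V - Z)"
        using \<open>finite V\<close> by (intro psubset_card_mono) auto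
      then show ?thesis
        using less.hyps[of b] A that less.prems(2,3) \<open>Z \<subset> b\<close> by blast
    qed
    then have "x \<in> V \<inter> \<Inter>A" using less.prems(2) by blast
    moreover have "V \<inter> \<Inter>A \<subseteq> Z"
      using A(2) Inter_closed[OF A(1)] by (auto simp: is_meet_in_def)
    ultimately show ?thesis by blast
  qed
qed

context
  fixes V :: "'a set" and E :: "'a \<Rightarrow> 'a \<Rightarrow> bool"
  assumes sym: "\<And>x y. E x y \<Longrightarrow> E y x"
begin

lemma subset_nab_nab: "X \<subseteq> V \<Longrightarrow> X \<subseteq> nab V E (nab V E X)"
  using sym by (auto simp: mem_nab)

lemma nab_in_Lat:
  assumes "X \<subseteq> V"
  shows "nab V E X \<in> Lat V E"
proof -
  have "nab V E X \<subseteq> V" by (simp add: nab_def)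
  moreover have "nab V E (nab V E (nab V E X)) = nab V E X"
  proof
    show "nab V E (nab V E (nab V E X)) \<subseteq> nab V E X"
      by (rule nab_antimono, rule subset_nab_nab[OF assms])
    show "nab V E X \<subseteq> nab V E (nab V E (nab V E X))"
      using subset_nab_nab \<open>nab V E X \<subseteq> V\<close> .
  qed
  ultimately show ?thesis by (simp add: Lat_def)
qed

lemma nbhd_in_Lat: "y \<in> V \<Longrightarrow> nbhd V E y \<in> Lat V E"
  by (simp add: nbhd_eq_nab_singleton nab_in_Lat)

lemma Lat_Inter_closed:
  assumes "A \<subseteq> Lat V E"
  shows "V \<inter> \<Inter>A \<in> Lat V E"
proof -
  have "nab V E (nab V E (V \<inter> \<Inter>A)) \<subseteq> b" if "b \<in> A" for b
    using nab_antimono[OF nab_antimono, of "V \<inter> \<Inter>A" b V E V E] Lat_nab_nab assms that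
    by blast
  then have "nab V E (nab V E (V \<inter> \<Inter>A)) \<subseteq> V \<inter> \<Inter>A"
    by (auto simp: mem_nab)
  then show ?thesis
    using subset_nab_nab[of "V \<inter> \<Inter>A"] by (auto simp: Lat_def)
qed

lemma Lat_is_meet_of_nbhds:
  assumes "M \<in> Lat V E"
  shows "is_meet_in (Lat V E) {nbhd V E y | y. y \<in> nab V E M} M"
  unfolding is_meet_in_def
proof (intro conjI ballI impI)
  fix b assume "b \<in> {nbhd V E y | y. y \<in> nab V E M}"
  then show "M \<subseteq> b"
    using Lat_subset[OF assms] sym by (auto simp: mem_nab nbhd_def)
next
  fix c assume c: "c \<in> Lat V E" "\<forall>b\<in>{nbhd V E y | y. y \<in> nab V E M}. c \<subseteq> b"
  have "c \<subseteq> nab V E (nab V E M)"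
  proof
    fix x assume "x \<in> c"
    have "E y x" if "y \<in> nab V E M" for y
      using c(2) that \<open>x \<in> c\<close> by (auto simp: nbhd_def)
    then show "x \<in> nab V E (nab V E M)"
      using Lat_subset[OF c(1)] \<open>x \<in> c\<close> by (auto simp: mem_nab)
  qed
  then show "c \<subseteq> M" using Lat_nab_nab[OF assms] by simp
qed (fact assms)

lemma meet_irreducible_eq_nbhd_essential:
  assumes "meet_irreducible_in (Lat V E) M"
  obtains y where "y \<in> nab V E M" "essential V E y" "M = nbhd V E y"
proof -
  have "M \<in> Lat V E" using assms by (simp add: meet_irreducible_in_def)
  moreover have "{nbhd V E y | y. y \<in> nab V E M} \<subseteq> Lat V E"
    using nbhd_in_Lat by (auto simp: mem_nab)
  ultimately have "M \<in> {nbhd V E y | y. y \<in> nab V E M}"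
    using assms Lat_is_meet_of_nbhds[OF \<open>M \<in> Lat V E\<close>]
    unfolding meet_irreducible_in_def by blast
  then obtain y where "y \<in> nab V E M" "M = nbhd V E y" by blast
  moreover have "essential V E y"
    using calculation assms by (simp add: essential_def mem_nab)
  ultimately show thesis using that by blast
qed

lemma nab_essential_part:
  assumes "finite V" and "Y \<in> Lat V E"
  shows "nab V E {y \<in> Y. essential V E y} = nab V E Y"
proof
  show "nab V E {y \<in> Y. essential V E y} \<subseteq> nab V E Y"
  proof
    fix w assume w: "w \<in> nab V E {y \<in> Y. essential V E y}"
    have "w \<in> M" if M: "meet_irreducible_in (Lat V E) M" "nab V E Y \<subseteq> M" for M
    proof -
      obtain y where y: "y \<in> nab V E M" "essential V E y" "M = nbhd V E y"
        using meet_irreducible_eq_nbhd_essential[OF M(1)] .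
      have "y \<in> Y"
        using nab_antimono[OF M(2)] y(1) Lat_nab_nab[OF assms(2)] by blast
      then show "w \<in> M" using w y by (simp add: mem_nab nbhd_def)
    qed
    moreover have "nab V E Y \<in> Lat V E"
      using nab_in_Lat Lat_subset[OF assms(2)] .
    moreover have "w \<in> V" using w by (simp add: mem_nab)
    ultimately show "w \<in> nab V E Y"
      using mem_meet_irreducibles_imp_mem[OF assms(1) Lat_subset_Pow Lat_Inter_closed] by blast
  qed
qed (rule nab_antimono, blast)

lemma essential_in_Lat_diff:
  assumes "finite V" and "Y \<in> Lat V E" and "Y' \<in> Lat V E" and "Y \<subset> Y'"
  obtains y where "y \<in> Y' - Y" "essential V E y"
proof (rule ccontr)
  assume "\<not> thesis"
  then have "{y \<in> Y'. essential V E y} \<subseteq> Y" using that by blast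
  then have "nab V E Y \<subseteq> nab V E Y'"
    using nab_antimono nab_essential_part[OF assms(1,3)] by blast
  then have "nab V E (nab V E Y') \<subseteq> nab V E (nab V E Y)"
    by (rule nab_antimono)
  then have "Y' \<subseteq> Y"
    using Lat_nab_nab[OF assms(2)] Lat_nab_nab[OF assms(3)] by simp
  then show False using \<open>Y \<subset> Y'\<close> by blast
qed

lemma eqclass_subset_Lat:
  assumes "Z \<in> Lat V E" and "y \<in> Z"
  shows "eqclass V E y \<subseteq> Z"
proof
  fix z assume "z \<in> eqclass V E y"
  then have "z \<in> V" "nbhd V E z = nbhd V E y" by (auto simp: eqclass_def)
  have "E w z" if "w \<in> nab V E Z" for w
  proof -
    have "w \<in> nbhd V E y" using that \<open>y \<in> Z\<close> by (simp add: mem_nab nbhd_def)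
    then have "w \<in> nbhd V E z" using \<open>nbhd V E z = nbhd V E y\<close> by simp
    then show "E w z" using sym by (simp add: nbhd_def)
  qed
  then have "z \<in> nab V E (nab V E Z)"
    using \<open>z \<in> V\<close> by (simp add: mem_nab)
  then show "z \<in> Z" using Lat_nab_nab[OF assms(1)] by simp
qed

lemma eqclass_neq_if_separated_by_Lat:
  assumes "Z \<in> Lat V E" and "y \<in> Z" and "z \<in> V - Z"
  shows "eqclass V E y \<noteq> eqclass V E z"
  using eqclass_subset_Lat[OF assms(1,2)] self_mem_eqclass[of z V E] assms(3) by blast

end

theorem mainTheorem20:
  fixes V :: "'a set" and E :: "'a \<Rightarrow> 'a \<Rightarrow> bool"
    and X :: "'a set" and Y :: "nat \<Rightarrow> 'a set" and n :: nat
  assumes "finite V"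
    and "\<And>x y. E x y \<Longrightarrow> E y x"
    and "X \<in> Lat V E"
    and "\<And>i. i \<le> n \<Longrightarrow> Y i \<in> Lat V E"
    and "\<And>i. i < n \<Longrightarrow> Y i \<subset> Y (Suc i)"
    and "Y n = X"
  shows "n \<le> card {eqclass V E x | x. x \<in> X \<and> essential V E x}"
proof -
  let ?C = "{eqclass V E x | x. x \<in> X \<and> essential V E x}"
  have chain: "Y i \<subseteq> Y j" if "i \<le> j" "j \<le> n" for i j
    using lift_Suc_mono_le_ivl[of "{..<n}" Y i j] assms(5) that by fastforce
  have "\<exists>y. y \<in> Y (Suc i) - Y i \<and> essential V E y" if "i < n" for i
    using essential_in_Lat_diff[OF assms(2,1) assms(4)[of i] assms(4)[of "Suc i"] assms(5)[OF that]]
      that by auto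
  then obtain g where g: "\<And>i. i < n \<Longrightarrow> g i \<in> Y (Suc i) - Y i \<and> essential V E (g i)"
    by metis
  have inj: "inj_on (\<lambda>i. eqclass V E (g i)) {..<n}"
  proof (rule linorder_inj_onI')
    fix i j assume "i \<in> {..<n}" "j \<in> {..<n}" "i < j"
    then have "g i \<in> Y j" "g j \<in> V - Y j"
      using g[of i] g[of j] chain[of "Suc i" j] by (auto simp: essential_def)
    then show "eqclass V E (g i) \<noteq> eqclass V E (g j)"
      using eqclass_neq_if_separated_by_Lat[OF assms(2) assms(4)[of j]] \<open>j \<in> {..<n}\<close> by simp
  qed
  have sub: "(\<lambda>i. eqclass V E (g i)) ` {..<n} \<subseteq> ?C"
  proof (rule image_subsetI)
    fix i assume "i \<in> {..<n}"
    then have "g i \<in> X" "essential V E (g i)"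
      using g[of i] chain[of "Suc i" n] assms(6) by auto
    then show "eqclass V E (g i) \<in> ?C" by blast
  qed
  have "finite ?C"
    by (rule finite_subset[of _ "Pow V"]) (auto simp: eqclass_def \<open>finite V\<close>)
  then have "card ((\<lambda>i. eqclass V E (g i)) ` {..<n}) \<le> card ?C"
    using sub by (rule card_mono)
  then show ?thesis
    using card_image[OF inj] by simp
qed

end
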